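(* Let $A$ be a real symmetric $n\times n$ matrix such that the graph $\mathcal{G}(A)$ is connected and all nonzero off-diagonal entries of $A$ have the same sign. Let $V=\{1,\dots,n\}$ be the vertex set of $\mathcal{G}(A)$ and let $S\subseteq V$ be a zero forcing set of $\mathcal{G}(A)$. Then the real Lie algebra generated by $A$ and $\{{\bf e}_j{\bf e}_j^T: j\in S\}$ equals $gl(n,\mathbb{R})$.
   Context: ${\bf e}_j$ is the $j$th standard basis vector of $\mathbb{R}^n$. For a real symmetric $A=[a_{kj}]$, $\mathcal{G}(A)$ is the simple graph on $\{1,\dots,n\}$ with edges $\{kj: a_{kj}\neq0,\ k\neq j\}$. Zero forcing: color each vertex of a graph black or white; a black vertex $v$ forces (infects) a white vertex $w$ if $w$ is the unique white neighbor of $v$, in which case $w$ is recolored black. A set $S$ of vertices is a zero forcing set if, starting with exactly the vertices in $S$ black and repeatedly applying forces, all vertices eventually become black. The real Lie algebra generated by a set of matrices is the smallest real vector space containing them closed under $[X,Y]=XY-YX$; $gl(n,\mathbb{R})$ is the Lie algebra of all real $n\times n$ matrices. *)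

theory Defs
  imports "HOL-Analysis.Analysis"
begin

text \<open>Matrices are n x n real matrices indexed by a finite type 'n (the vertex set V).\<close>

definition graph_edge :: "real^'n^'n \<Rightarrow> 'n \<Rightarrow> 'n \<Rightarrow> bool" where
  "graph_edge A k j \<longleftrightarrow> k \<noteq> j \<and> A $ k $ j \<noteq> 0"

definition graph_connected :: "real^'n^'n \<Rightarrow> bool" where
  "graph_connected A \<longleftrightarrow> (\<forall>i j. (i, j) \<in> {(k, l). graph_edge A k l}\<^sup>*)"

inductive_set zf_closure :: "('a \<Rightarrow> 'a \<Rightarrow> bool) \<Rightarrow> 'a set \<Rightarrow> 'a set"
  for E :: "'a \<Rightarrow> 'a \<Rightarrow> bool" and S :: "'a set" where
  init: "v \<in> S \<Longrightarrow> v \<in> zf_closure E S"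
| force: "\<lbrakk>v \<in> zf_closure E S; E v w;
           \<And>u. E v u \<Longrightarrow> u \<noteq> w \<Longrightarrow> u \<in> zf_closure E S\<rbrakk>
          \<Longrightarrow> w \<in> zf_closure E S"

definition zero_forcing_set :: "('a \<Rightarrow> 'a \<Rightarrow> bool) \<Rightarrow> 'a set \<Rightarrow> bool" where
  "zero_forcing_set E S \<longleftrightarrow> zf_closure E S = UNIV"

definition lie_bracket :: "real^'n^'n \<Rightarrow> real^'n^'n \<Rightarrow> real^'n^'n" where
  "lie_bracket X Y = X ** Y - Y ** X"

definition lie_generated :: "(real^'n^'n) set \<Rightarrow> (real^'n^'n) set" where
  "lie_generated G = \<Inter>{L. subspace L \<and> G \<subseteq> L \<and>
      (\<forall>X\<in>L. \<forall>Y\<in>L. lie_bracket X Y \<in> L)}"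

definition diag_unit :: "'n \<Rightarrow> real^'n^'n" where
  "diag_unit j = (\<chi> k l. if k = j \<and> l = j then 1 else 0)"

end

theory Submission
  imports Defs
begin

text \<open>Write \<open>E\<^sub>i\<^sub>j\<close> for the matrix units and \<open>L\<close> for the generated Lie algebra.
  For symmetric \<open>A\<close>, \<open>[E\<^sub>v\<^sub>v, A] = \<Sigma>\<^sub>u A\<^sub>v\<^sub>u (E\<^sub>v\<^sub>u - E\<^sub>u\<^sub>v)\<close>, and \<open>ad(E\<^sub>u\<^sub>u)\<^sup>2\<close> isolates the
  summand of index \<open>u\<close>. So if \<open>E\<^sub>v\<^sub>v \<in> L\<close> and \<open>E\<^sub>u\<^sub>u \<in> L\<close> for all neighbours \<open>u\<close> of \<open>v\<close>
  but one, \<open>w\<close>, then \<open>E\<^sub>v\<^sub>w - E\<^sub>w\<^sub>v \<in> L\<close>; bracketing with \<open>E\<^sub>v\<^sub>v\<close> gives \<open>E\<^sub>v\<^sub>w + E\<^sub>w\<^sub>v\<close>, hence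
  \<open>E\<^sub>v\<^sub>w, E\<^sub>w\<^sub>v \<in> L\<close> and \<open>E\<^sub>w\<^sub>w = E\<^sub>v\<^sub>v - [E\<^sub>v\<^sub>w, E\<^sub>w\<^sub>v] \<in> L\<close>. Thus every zero forcing step
  puts a new diagonal unit into \<open>L\<close>, so all of them lie in \<open>L\<close>, then all \<open>E\<^sub>v\<^sub>w\<close> along
  edges, and by \<open>[E\<^sub>u\<^sub>y, E\<^sub>y\<^sub>z] = E\<^sub>u\<^sub>z\<close> along paths of the connected graph all matrix units.
  The sign condition on the off-diagonal entries is not needed for this argument.\<close>

definition matrix_unit :: "'n \<Rightarrow> 'n \<Rightarrow> real^'n^'n" where
  "matrix_unit i j = (\<chi> k l. if k = i \<and> l = j then 1 else 0)"

lemma matrix_unit_nth: "matrix_unit i j $ a $ b = (if a = i \<and> b = j then 1 else 0)"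
  by (simp add: matrix_unit_def)

lemma diag_unit_eq_matrix_unit: "diag_unit j = matrix_unit j j"
  by (simp add: diag_unit_def matrix_unit_def)

lemma matrix_unit_mult_nth: "(matrix_unit i j ** M) $ a $ b = (if a = i then M $ j $ b else 0)"
  by (simp add: matrix_matrix_mult_def matrix_unit_nth if_distrib if_distribR sum.delta cong: if_cong)

lemma mult_matrix_unit_nth: "(M ** matrix_unit i j) $ a $ b = (if b = j then M $ a $ i else 0)"
  by (simp add: matrix_matrix_mult_def matrix_unit_nth if_distrib if_distribR sum.delta cong: if_cong)

lemma matrix_unit_mult_matrix_unit:
  "matrix_unit i j ** matrix_unit k l = (if j = k then matrix_unit i l else 0)"
  by (auto simp: vec_eq_iff matrix_unit_mult_nth matrix_unit_nth)

lemma lie_bracket_matrix_unit_chain: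
  "i \<noteq> l \<Longrightarrow> lie_bracket (matrix_unit i j) (matrix_unit j l) = matrix_unit i l"
  by (simp add: lie_bracket_def matrix_unit_mult_matrix_unit)

lemma lie_bracket_diag_unit_nth:
  "lie_bracket (matrix_unit k k) M $ i $ j =
     (if i = k then M $ k $ j else 0) - (if j = k then M $ i $ k else 0)"
  by (simp add: lie_bracket_def matrix_unit_mult_nth mult_matrix_unit_nth)

lemma matrix_eq_sum_matrix_units: "M = (\<Sum>i\<in>UNIV. \<Sum>j\<in>UNIV. M $ i $ j *\<^sub>R matrix_unit i j)"
proof -
  have "(\<Sum>i\<in>UNIV. \<Sum>j\<in>UNIV. M $ i $ j *\<^sub>R matrix_unit i j) $ a $ b = M $ a $ b" for a b
  proof -
    have "(\<Sum>i\<in>UNIV. \<Sum>j\<in>UNIV. M $ i $ j *\<^sub>R matrix_unit i j) $ a $ b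
        = (\<Sum>i\<in>UNIV. if i = a then \<Sum>j\<in>UNIV. if j = b then M $ i $ j else 0 else 0)"
      unfolding sum_component
      by (intro sum.cong refl) (simp add: sum_component matrix_unit_nth if_distrib cong: if_cong)
    then show ?thesis
      by simp
  qed
  then show ?thesis
    by (simp add: vec_eq_iff)
qed

definition lie_subalgebra :: "(real^'n^'n) set \<Rightarrow> bool" where
  "lie_subalgebra L \<longleftrightarrow> subspace L \<and> (\<forall>X\<in>L. \<forall>Y\<in>L. lie_bracket X Y \<in> L)"

lemma lie_subalgebra_lie_generated: "lie_subalgebra (lie_generated G)"
  unfolding lie_subalgebra_def lie_generated_def by (auto intro!: subspace_Inter)

lemma lie_generated_superset: "G \<subseteq> lie_generated G"
  unfolding lie_generated_def by auto

lemma lie_subalgebraD: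
  assumes "lie_subalgebra L"
  shows "subspace L" and "X \<in> L \<Longrightarrow> Y \<in> L \<Longrightarrow> lie_bracket X Y \<in> L"
  using assms by (auto simp: lie_subalgebra_def)

lemma subspace_eq_UNIV_if_matrix_units:
  assumes "subspace L" and "\<And>i j. matrix_unit i j \<in> L"
  shows "L = UNIV"
proof -
  have "(\<Sum>i\<in>UNIV. \<Sum>j\<in>UNIV. M $ i $ j *\<^sub>R matrix_unit i j) \<in> L" for M
    by (intro subspace_sum subspace_scale assms)
  then have "M \<in> L" for M
    by (rule ssubst[OF matrix_eq_sum_matrix_units])
  then show ?thesis
    by blast
qed

lemma symmetric_entry:
  assumes "transpose A = A"
  shows "A $ i $ j = A $ j $ i"
proof -
  have "A $ i $ j = transpose A $ i $ j"
    using assms by simp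
  also have "\<dots> = A $ j $ i"
    by (simp add: transpose_def)
  finally show ?thesis .
qed

lemma lie_bracket_diag_unit_symmetric:
  assumes "transpose A = A"
  shows "lie_bracket (matrix_unit v v) A =
           (\<Sum>u\<in>UNIV-{v}. A $ v $ u *\<^sub>R (matrix_unit v u - matrix_unit u v))"
proof -
  have "(\<Sum>u\<in>UNIV-{v}. A $ v $ u *\<^sub>R (matrix_unit v u - matrix_unit u v)) $ i $ j
      = lie_bracket (matrix_unit v v) A $ i $ j" for i j
  proof -
    have "(\<Sum>u\<in>UNIV-{v}. A $ v $ u *\<^sub>R (matrix_unit v u - matrix_unit u v)) $ i $ j
        = (\<Sum>u\<in>UNIV-{v}. (if u = j then if i = v then A $ v $ u else 0 else 0)
                         - (if u = i then if j = v then A $ v $ u else 0 else 0))"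
      unfolding sum_component
      by (intro sum.cong refl) (auto simp: matrix_unit_nth)
    also have "\<dots> = lie_bracket (matrix_unit v v) A $ i $ j"
      using symmetric_entry[OF assms, of i v]
      by (auto simp: sum_subtractf sum.delta lie_bracket_diag_unit_nth)
    finally show ?thesis .
  qed
  then show ?thesis
    by (simp add: vec_eq_iff)
qed

lemma lie_bracket_diag_unit_twice_symmetric:
  assumes "transpose A = A" and "u \<noteq> v"
  shows "lie_bracket (matrix_unit u u) (lie_bracket (matrix_unit u u) (lie_bracket (matrix_unit v v) A))
           = A $ v $ u *\<^sub>R (matrix_unit v u - matrix_unit u v)"
  using assms(2) symmetric_entry[OF assms(1), of u v]
  by (auto simp: vec_eq_iff lie_bracket_diag_unit_nth matrix_unit_nth)

lemma skew_unit_in_lie_subalgebra_if_forcing: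
  assumes L: "lie_subalgebra L" and sym: "transpose A = A" and "A \<in> L"
    and v: "matrix_unit v v \<in> L" and vw: "v \<noteq> w" "A $ v $ w \<noteq> 0"
    and neighbours: "\<And>u. u \<noteq> v \<Longrightarrow> u \<noteq> w \<Longrightarrow> A $ v $ u \<noteq> 0 \<Longrightarrow> matrix_unit u u \<in> L"
  shows "matrix_unit v w - matrix_unit w v \<in> L"
proof -
  note subspace = lie_subalgebraD(1)[OF L] and bracket = lie_subalgebraD(2)[OF L]
  define summand where "summand u = A $ v $ u *\<^sub>R (matrix_unit v u - matrix_unit u v)" for u
  have vA: "lie_bracket (matrix_unit v v) A \<in> L"
    using bracket[OF v \<open>A \<in> L\<close>] .
  have summand_in: "summand u \<in> L" if "u \<in> UNIV-{v}-{w}" for u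
  proof (cases "A $ v $ u = 0")
    case True
    then show ?thesis
      using subspace_0[OF subspace] by (simp add: summand_def)
  next
    case False
    with that neighbours have u: "matrix_unit u u \<in> L"
      by auto
    have "lie_bracket (matrix_unit u u) (lie_bracket (matrix_unit u u) (lie_bracket (matrix_unit v v) A)) \<in> L"
      using bracket[OF u bracket[OF u vA]] .
    with that show ?thesis
      by (simp add: summand_def lie_bracket_diag_unit_twice_symmetric[OF sym])
  qed
  have "lie_bracket (matrix_unit v v) A = summand w + (\<Sum>u\<in>UNIV-{v}-{w}. summand u)"
    using lie_bracket_diag_unit_symmetric[OF sym, of v] sum.remove[of "UNIV-{v}" w summand] vw(1)
    by (simp add: summand_def)
  then have "summand w = lie_bracket (matrix_unit v v) A - (\<Sum>u\<in>UNIV-{v}-{w}. summand u)"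
    by (simp add: algebra_simps)
  also have "\<dots> \<in> L"
    using subspace_diff[OF subspace vA subspace_sum[OF subspace summand_in]] .
  finally have "(1 / A $ v $ w) *\<^sub>R summand w \<in> L"
    using subspace_scale[OF subspace] by blast
  with vw(2) show ?thesis
    by (simp add: summand_def)
qed

lemma matrix_units_in_lie_subalgebra_if_skew_unit:
  assumes L: "lie_subalgebra L" and v: "matrix_unit v v \<in> L"
    and skew: "matrix_unit v w - matrix_unit w v \<in> L" and "v \<noteq> w"
  shows "matrix_unit v w \<in> L" and "matrix_unit w v \<in> L" and "matrix_unit w w \<in> L"
proof -
  note subspace = lie_subalgebraD(1)[OF L] and bracket = lie_subalgebraD(2)[OF L]
  have "lie_bracket (matrix_unit v v) (matrix_unit v w - matrix_unit w v) = matrix_unit v w + matrix_unit w v"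
    using \<open>v \<noteq> w\<close> by (auto simp: vec_eq_iff lie_bracket_diag_unit_nth matrix_unit_nth)
  then have sym: "matrix_unit v w + matrix_unit w v \<in> L"
    using bracket[OF v skew] by simp
  have "(1/2) *\<^sub>R ((matrix_unit v w + matrix_unit w v) + (matrix_unit v w - matrix_unit w v)) \<in> L"
    using subspace_scale[OF subspace subspace_add[OF subspace sym skew]] .
  then show vw: "matrix_unit v w \<in> L"
    by (simp add: scaleR_2[symmetric] algebra_simps)
  have "(1/2) *\<^sub>R ((matrix_unit v w + matrix_unit w v) - (matrix_unit v w - matrix_unit w v)) \<in> L"
    using subspace_scale[OF subspace subspace_diff[OF subspace sym skew]] .
  then show wv: "matrix_unit w v \<in> L"
    by (simp add: scaleR_2[symmetric] algebra_simps)
  have "lie_bracket (matrix_unit v w) (matrix_unit w v) = matrix_unit v v - matrix_unit w w"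
    using \<open>v \<noteq> w\<close> by (simp add: lie_bracket_def matrix_unit_mult_matrix_unit)
  then have "matrix_unit v v - (matrix_unit v v - matrix_unit w w) \<in> L"
    using subspace_diff[OF subspace v bracket[OF vw wv]] by simp
  then show "matrix_unit w w \<in> L"
    by simp
qed

lemma edge_unit_in_lie_subalgebra:
  assumes L: "lie_subalgebra L" and sym: "transpose A = A" and "A \<in> L"
    and diag: "\<And>u. matrix_unit u u \<in> L" and "graph_edge A v w"
  shows "matrix_unit v w \<in> L"
proof -
  have vw: "v \<noteq> w" "A $ v $ w \<noteq> 0"
    using \<open>graph_edge A v w\<close> by (auto simp: graph_edge_def)
  have "matrix_unit v w - matrix_unit w v \<in> L"
    using skew_unit_in_lie_subalgebra_if_forcing[OF L sym \<open>A \<in> L\<close> diag vw diag] .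
  then show ?thesis
    using matrix_units_in_lie_subalgebra_if_skew_unit(1)[OF L diag _ vw(1)] by blast
qed

lemma diag_unit_in_lie_subalgebra_if_zf_closure:
  assumes L: "lie_subalgebra L" and sym: "transpose A = A" and "A \<in> L"
    and S: "\<And>j. j \<in> S \<Longrightarrow> matrix_unit j j \<in> L"
    and "v \<in> zf_closure (graph_edge A) S"
  shows "matrix_unit v v \<in> L"
  using \<open>v \<in> zf_closure (graph_edge A) S\<close>
proof (induction rule: zf_closure.induct)
  case (init v)
  then show ?case
    by (rule S)
next
  case (force v w)
  have vw: "v \<noteq> w" "A $ v $ w \<noteq> 0"
    using force.hyps(2) by (auto simp: graph_edge_def)
  have "matrix_unit v w - matrix_unit w v \<in> L"
    using force.IH(2)
    by (intro skew_unit_in_lie_subalgebra_if_forcing[OF L sym \<open>A \<in> L\<close> force.IH(1) vw])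
       (auto simp: graph_edge_def)
  then show ?case
    using matrix_units_in_lie_subalgebra_if_skew_unit(3)[OF L force.IH(1) _ vw(1)] by blast
qed

lemma path_unit_in_lie_subalgebra:
  assumes L: "lie_subalgebra L"
    and diag: "\<And>u. matrix_unit u u \<in> L"
    and edge: "\<And>v w. graph_edge A v w \<Longrightarrow> matrix_unit v w \<in> L"
    and "(u, w) \<in> {(k, l). graph_edge A k l}\<^sup>*"
  shows "matrix_unit u w \<in> L"
  using \<open>(u, w) \<in> _\<close>
proof (induction rule: rtrancl_induct)
  case base
  then show ?case
    by (rule diag)
next
  case (step y z)
  show ?case
  proof (cases "u = z")
    case True
    then show ?thesis
      using diag by simp
  next
    case False
    have "lie_bracket (matrix_unit u y) (matrix_unit y z) \<in> L"
      using lie_subalgebraD(2)[OF L step.IH edge] step.hyps(2) by auto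
    with False show ?thesis
      by (simp add: lie_bracket_matrix_unit_chain)
  qed
qed

theorem theorem4p1:
  fixes A :: "real^'n^'n" and S :: "'n set"
  assumes "transpose A = A"
    and "graph_connected A"
    and "(\<forall>k j. k \<noteq> j \<and> A $ k $ j \<noteq> 0 \<longrightarrow> A $ k $ j > 0) \<or>
         (\<forall>k j. k \<noteq> j \<and> A $ k $ j \<noteq> 0 \<longrightarrow> A $ k $ j < 0)"
    and "zero_forcing_set (graph_edge A) S"
  shows "lie_generated ({A} \<union> diag_unit ` S) = UNIV"
proof -
  define L where "L = lie_generated ({A} \<union> diag_unit ` S)"
  have L: "lie_subalgebra L"
    unfolding L_def by (rule lie_subalgebra_lie_generated)
  have A: "A \<in> L" and S: "\<And>j. j \<in> S \<Longrightarrow> matrix_unit j j \<in> L"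
    using lie_generated_superset unfolding L_def by (fastforce simp: diag_unit_eq_matrix_unit)+
  have diag: "matrix_unit v v \<in> L" for v
    using diag_unit_in_lie_subalgebra_if_zf_closure[OF L assms(1) A S] assms(4)
    by (simp add: zero_forcing_set_def)
  have edge: "matrix_unit v w \<in> L" if "graph_edge A v w" for v w
    using edge_unit_in_lie_subalgebra[OF L assms(1) A diag that] .
  have "matrix_unit u w \<in> L" for u w
    using path_unit_in_lie_subalgebra[OF L diag edge] assms(2) by (simp add: graph_connected_def)
  then show ?thesis
    unfolding L_def[symmetric]
    using subspace_eq_UNIV_if_matrix_units[OF lie_subalgebraD(1)[OF L]] by blast
qed

end
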